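(* For every integer $n\ge0$, as polynomials in $z$, $$\sum_{k=0}^n\binom nk^2\binom{-\imath z-\tfrac12+k}{n}=(-1)^n\,{}_3F_2\!\left(\begin{matrix}-n,\ n+1,\ \tfrac12-\imath z\\ 1,\ 1\end{matrix}\,\Big|\,1\right).$$ Equivalently, the polynomial $P_n(z)=\frac{\imath^n(n!)^3}{(2n)!}\sum_{k=0}^n\binom nk^2\binom{-\imath z-\frac12+k}{n}$ associated to $a_{n,k}=\binom{2n}{n}^{-1}\binom nk^2$ equals $\frac{(-\imath)^n(n!)^3}{(2n)!}\,{}_3F_2\!\left(\begin{smallmatrix}-n,\ n+1,\ \frac12-\imath z\\ 1,\ 1\end{smallmatrix}\big|1\right)$.
   Context: $\imath=\sqrt{-1}$. For complex $x$, $\binom{x}{n}=\frac{1}{n!}\prod_{\ell=0}^{n-1}(x-\ell)$; $(x)_k=x(x+1)\cdots(x+k-1)$. ${}_3F_2\!\left(\begin{smallmatrix}a_1,a_2,a_3\\ b_1,b_2\end{smallmatrix}\big|x\right)=\sum_{k\ge0}\frac{(a_1)_k(a_2)_k(a_3)_k}{(b_1)_k(b_2)_k}\frac{x^k}{k!}$ (terminating here since $a_1=-n$). *)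

theory Defs
  imports Complex_Main
begin

text \<open>Generalized hypergeometric 3F2 with upper parameter a1 = -n (terminating),
  written as the finite sum over k = 0..n (terms with k > n vanish since (-n)_k = 0).\<close>
definition hyp3F2_term :: "nat \<Rightarrow> complex \<Rightarrow> complex \<Rightarrow> complex \<Rightarrow> complex \<Rightarrow> complex \<Rightarrow> complex" where
  "hyp3F2_term n a2 a3 b1 b2 x =
     (\<Sum>k=0..n. pochhammer (- of_nat n) k * pochhammer a2 k * pochhammer a3 k
        / (pochhammer b1 k * pochhammer b2 k) * x ^ k / fact k)"

end

theory Submission
  imports Defs "HOL-Computational_Algebra.Formal_Power_Series"
begin

text \<open>Write \<open>S\<^sub>n(y) = \<Sum>\<^sub>k C(n,k)\<^sup>2 C(y+k,n)\<close>. Expanding \<open>C(y+k,n)\<close> by Vandermonde's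
  identity and summing over \<open>k\<close> gives \<open>S\<^sub>n(y) = \<Sum>\<^sub>j C(n,j) C(n+j,j) C(y,j)\<close>, and
  \<open>C(n,j) C(n+j,j) C(-1-y,j)\<close> is exactly the \<open>j\<close>-th term of the \<open>\<^sub>3F\<^sub>2\<close> series with
  \<open>a\<^sub>3 = y + 1\<close>. Negating the upper index and reversing the summation shows
  \<open>S\<^sub>n(-1-y) = (-1)\<^sup>n S\<^sub>n(y)\<close>, which produces the sign.\<close>

lemma sum_binomial_sq_mult_choose:
  assumes "j \<le> n"
  shows "(\<Sum>k=0..n. (n choose k)^2 * (k choose (n - j))) = (n choose j) * ((n + j) choose j)"
proof -
  have "(\<Sum>k=0..n. (n choose k)^2 * (k choose (n - j)))
        = (\<Sum>k=n-j..n. (n choose k)^2 * (k choose (n - j)))"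
    by (rule sum.mono_neutral_right) auto
  also have "\<dots> = (\<Sum>i=0..j. (n choose (i + (n - j)))^2 * ((i + (n - j)) choose (n - j)))"
    using sum.shift_bounds_cl_nat_ivl[of "\<lambda>k. (n choose k)^2 * (k choose (n - j))" 0 "n - j" j] assms
    by simp
  also have "\<dots> = (\<Sum>i=0..j. (n choose j) * ((j choose i) * (n choose (j - i))))"
  proof (rule sum.cong[OF refl])
    fix i assume i: "i \<in> {0..j}"
    have "(n choose (i + (n - j))) * ((i + (n - j)) choose (n - j))
          = (n choose (n - j)) * (j choose i)"
      using i assms choose_mult[of "n - j" "i + (n - j)" n] by simp
    moreover have "n choose (n - j) = n choose j"
      using assms by (simp add: binomial_symmetric[symmetric])
    moreover have "n choose (i + (n - j)) = n choose (j - i)"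
      using i assms binomial_symmetric[of "i + (n - j)" n] by (auto simp: algebra_simps)
    ultimately show "(n choose (i + (n - j)))^2 * ((i + (n - j)) choose (n - j))
                     = (n choose j) * ((j choose i) * (n choose (j - i)))"
      by (simp add: power2_eq_square)
  qed
  also have "\<dots> = (n choose j) * ((j + n) choose j)"
    using vandermonde[of j n j] by (simp add: sum_distrib_left[symmetric] atLeast0AtMost)
  finally show ?thesis by (simp add: add.commute)
qed

definition binomial_sq_sum :: "nat \<Rightarrow> 'a::field_char_0 \<Rightarrow> 'a" where
  "binomial_sq_sum n y = (\<Sum>k=0..n. of_nat ((n choose k)^2) * ((y + of_nat k) gchoose n))"

lemma binomial_sq_sum_gbinomial_expansion:
  "binomial_sq_sum n y = (\<Sum>j=0..n. of_nat ((n choose j) * ((n + j) choose j)) * (y gchoose j))"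
proof -
  have vandermonde: "(y + of_nat k) gchoose n = (\<Sum>j=0..n. (y gchoose j) * of_nat (k choose (n - j)))"
    for k
    using gbinomial_Vandermonde[of y "of_nat k" n] by (simp add: binomial_gbinomial)
  have "binomial_sq_sum n y
        = (\<Sum>j=0..n. \<Sum>k=0..n. of_nat ((n choose k)^2) * ((y gchoose j) * of_nat (k choose (n - j))))"
    unfolding binomial_sq_sum_def vandermonde sum_distrib_left by (rule sum.swap)
  also have "\<dots> = (\<Sum>j=0..n. (y gchoose j) * of_nat (\<Sum>k=0..n. (n choose k)^2 * (k choose (n - j))))"
    by (simp add: sum_distrib_left mult_ac)
  also have "\<dots> = (\<Sum>j=0..n. of_nat ((n choose j) * ((n + j) choose j)) * (y gchoose j))"
    by (rule sum.cong[OF refl]) (simp add: sum_binomial_sq_mult_choose del: of_nat_mult)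
  finally show ?thesis .
qed

lemma binomial_sq_sum_reflect: "binomial_sq_sum n (-1 - y) = (-1)^n * binomial_sq_sum n y"
proof -
  have negate: "(-1 - y + of_nat k) gchoose n = (-1)^n * ((y + of_nat (n - k)) gchoose n)"
    if "k \<le> n" for k
  proof -
    have "-1 - y + of_nat k = - (y + 1 - of_nat k)" by simp
    then have "(-1 - y + of_nat k) gchoose n = (-1)^n * ((y + 1 - of_nat k + of_nat n - 1) gchoose n)"
      by (simp only: gbinomial_minus)
    also have "y + 1 - of_nat k + of_nat n - 1 = y + of_nat (n - k)"
      using that by (simp add: of_nat_diff)
    finally show ?thesis .
  qed
  have "binomial_sq_sum n (-1 - y)
        = (\<Sum>k=0..n. of_nat ((n choose (n - k))^2) * ((-1)^n * ((y + of_nat (n - k)) gchoose n)))"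
    unfolding binomial_sq_sum_def
    by (rule sum.cong[OF refl]) (simp add: negate binomial_symmetric[symmetric])
  also have "\<dots> = (\<Sum>k=0..n. of_nat ((n choose k)^2) * ((-1)^n * ((y + of_nat k) gchoose n)))"
    using sum.atLeastAtMost_rev[of "\<lambda>k. of_nat ((n choose k)^2) * ((-1)^n * ((y + of_nat k) gchoose n))" 0 n]
    by simp
  also have "\<dots> = (-1)^n * binomial_sq_sum n y"
    unfolding binomial_sq_sum_def by (simp add: sum_distrib_left mult_ac)
  finally show ?thesis .
qed

lemma pochhammer_product_eq_binomials:
  fixes x :: "'a::field_char_0"
  shows "pochhammer (- of_nat n) k * pochhammer (of_nat n + 1) k * pochhammer (x + 1) k
           / (pochhammer 1 k * pochhammer 1 k) / fact k
         = of_nat ((n choose k) * ((n + k) choose k)) * ((-1 - x) gchoose k)"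
proof -
  have p1: "pochhammer (- of_nat n) k = (-1)^k * fact k * (of_nat n gchoose k :: 'a)"
    by (simp add: gbinomial_pochhammer)
  have p2: "pochhammer (of_nat n + 1) k = fact k * (of_nat (n + k) gchoose k :: 'a)"
    by (simp add: gbinomial_pochhammer')
  have p3: "pochhammer (x + 1) k = fact k * ((x + of_nat k) gchoose k)"
    by (simp add: gbinomial_pochhammer')
  have p4: "(x + of_nat k) gchoose k = (-1)^k * ((-1 - x) gchoose k)"
    by (simp add: gbinomial_negated_upper[of "-1 - x"] algebra_simps)
  show ?thesis
    unfolding p1 p2 p3 p4 pochhammer_fact[symmetric] by (simp add: binomial_gbinomial field_simps)
qed

lemma hyp3F2_term_eq_binomial_sq_sum:
  "hyp3F2_term n (of_nat n + 1) (x + 1) 1 1 1 = binomial_sq_sum n (-1 - x)"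
  unfolding hyp3F2_term_def binomial_sq_sum_gbinomial_expansion
  using pochhammer_product_eq_binomials[of n _ x] by simp

theorem lemma5p9:
  fixes n :: nat and z :: complex
  shows "(\<Sum>k=0..n. of_nat ((n choose k)^2) * ((- \<i> * z - 1/2 + of_nat k) gchoose n))
         = (-1)^n * hyp3F2_term n (of_nat n + 1) (1/2 - \<i> * z) 1 1 1"
proof -
  define x where "x = - \<i> * z - 1/2"
  have "1/2 - \<i> * z = x + 1" unfolding x_def by simp
  then have "(-1)^n * hyp3F2_term n (of_nat n + 1) (1/2 - \<i> * z) 1 1 1
             = (-1)^n * ((-1)^n * binomial_sq_sum n x)"
    by (simp add: hyp3F2_term_eq_binomial_sq_sum binomial_sq_sum_reflect)
  also have "\<dots> = binomial_sq_sum n x"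
    by (simp flip: power_mult_distrib)
  finally show ?thesis
    unfolding binomial_sq_sum_def x_def by simp
qed

end
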